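(* Let $A\in{\operatorname{\mathsf{TPD}}}_n(\mathbb{S}_{\max}^\vee)$, with $\gamma_i=a_{ii}$ ordered so that $\gamma_1\succeq\cdots\succeq\gamma_n$, and assume $\gamma=\gamma_1$ is simple, i.e. $\gamma_1\succ\gamma_2$. Let $v^{(1)}=(\gamma I\ominus A)^{\mathrm{adj}}_{:,1}$. If $v^{(1)}$ does not belong to $(\mathbb{S}_{\max}^\vee)^n$, then $A$ has no strong $\mathbb{S}_{\max}$-eigenvector associated to the eigenvalue $\gamma$.
   Context: $\mathbb{S}_{\max}$ is the symmetrized tropical semiring over a divisible totally ordered abelian group, with zero $\mathbf{0}$, unit $\mathbf{1}$, minus $\ominus$; $\mathbb{S}_{\max}^\vee$ is the set of signed elements (positive, negative or $\mathbf{0}$). $a\preceq b$ iff $b=a\oplus b$; $a\succ b$ iff $b\preceq a$ and $a\ne b$. $A\in{\operatorname{\mathsf{TPD}}}_n(\mathbb{S}_{\max}^\vee)$: $A$ symmetric with signed entries, $\mathbf{0}<a_{ii}$ and $a_{ij}^2<a_{ii}a_{jj}$ for $i\ne j$ (where $a<b$ iff $b\ominus a$ is positive). Its $\mathbb{S}_{\max}$-eigenvalues are its diagonal entries. $(M^{\mathrm{adj}})_{ij}=(\ominus\mathbf{1})^{i+j}\det M[\hat j,\hat i]$ (signed determinant), $M_{:,1}$ the first column. A strong $\mathbb{S}_{\max}$-eigenvector for $\gamma$ is $v\in(\mathbb{S}_{\max}^\vee)^n\setminus\{\mathbf{0}\}$ with $Av=\gamma v$. *)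

theory Defs
  imports "HOL-Combinatorics.Permutations"
begin

text \<open>The group is written additively ('a :: linordered_ab_group_add); tropical product is
group addition, tropical sum is max.  Elements: the zero (= -infinity), positive elements a,
negative elements (minus a), balanced elements a-dot.\<close>

datatype 'a smax = SZero | SPos 'a | SNeg 'a | SBal 'a

definition divisible_group :: "'a::linordered_ab_group_add itself \<Rightarrow> bool" where
  "divisible_group _ = (\<forall>(x::'a) (n::nat). n > 0 \<longrightarrow> (\<exists>y. (\<Sum>_\<in>{1..n}. y) = x))"

fun smag :: "'a::linordered_ab_group_add smax \<Rightarrow> 'a" where
  "smag SZero = 0"
| "smag (SPos a) = a"
| "smag (SNeg a) = a"
| "smag (SBal a) = a"

definition splus :: "'a::linordered_ab_group_add smax \<Rightarrow> 'a smax \<Rightarrow> 'a smax" where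
  "splus x y =
     (if x = SZero then y else if y = SZero then x
      else if smag y < smag x then x else if smag x < smag y then y
      else if x = y then x else SBal (smag x))"

fun stimes :: "'a::linordered_ab_group_add smax \<Rightarrow> 'a smax \<Rightarrow> 'a smax" where
  "stimes SZero y = SZero"
| "stimes x SZero = SZero"
| "stimes (SPos a) (SPos b) = SPos (a + b)"
| "stimes (SPos a) (SNeg b) = SNeg (a + b)"
| "stimes (SNeg a) (SPos b) = SNeg (a + b)"
| "stimes (SNeg a) (SNeg b) = SPos (a + b)"
| "stimes x y = SBal (smag x + smag y)"

fun sminus :: "'a smax \<Rightarrow> 'a smax" where
  "sminus SZero = SZero"
| "sminus (SPos a) = SNeg a"
| "sminus (SNeg a) = SPos a"
| "sminus (SBal a) = SBal a"

instantiation smax :: (linordered_ab_group_add) comm_monoid_add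
begin
definition zero_smax_def: "0 = SZero"
definition plus_smax_def: "x + y = splus x y"
instance
proof
  fix a b c :: "'a smax"
  show "a + b + c = a + (b + c)"
    unfolding plus_smax_def splus_def
    by (cases a; cases b; cases c) auto
  show "a + b = b + a"
    unfolding plus_smax_def splus_def
    by (cases a; cases b) auto
  show "0 + a = a"
    unfolding plus_smax_def splus_def zero_smax_def by simp
qed
end

instantiation smax :: (linordered_ab_group_add) comm_monoid_mult
begin
definition one_smax_def: "1 = SPos 0"
definition times_smax_def: "x * y = stimes x y"
instance
proof
  fix a b c :: "'a smax"
  show "a * b * c = a * (b * c)"
    unfolding times_smax_def
    by (cases a; cases b; cases c) (auto simp: add.assoc)
  show "a * b = b * a"
    unfolding times_smax_def
    by (cases a; cases b) (auto simp: add.commute)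
  show "1 * a = a"
    unfolding times_smax_def one_smax_def by (cases a) auto
qed
end

instantiation smax :: (type) uminus
begin
definition uminus_smax_def: "- x = sminus x"
instance ..
end

definition sdiff :: "'a::linordered_ab_group_add smax \<Rightarrow> 'a smax \<Rightarrow> 'a smax" (infixl "\<ominus>" 65) where
  "a \<ominus> b = a + (- b)"

definition signed :: "'a smax \<Rightarrow> bool" where
  "signed x = (\<forall>a. x \<noteq> SBal a)"

definition spositive :: "'a smax \<Rightarrow> bool" where
  "spositive x = (\<exists>a. x = SPos a)"

definition sle :: "'a::linordered_ab_group_add smax \<Rightarrow> 'a smax \<Rightarrow> bool" where
  "sle a b = (b = a + b)"

definition sgt :: "'a::linordered_ab_group_add smax \<Rightarrow> 'a smax \<Rightarrow> bool" where
  "sgt a b = (sle b a \<and> a \<noteq> b)"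

definition slt :: "'a::linordered_ab_group_add smax \<Rightarrow> 'a smax \<Rightarrow> bool" where
  "slt a b = spositive (b \<ominus> a)"

type_synonym 'a smat = "nat \<Rightarrow> nat \<Rightarrow> 'a smax"

definition psign :: "(nat \<Rightarrow> nat) \<Rightarrow> 'a::linordered_ab_group_add smax" where
  "psign p = (if evenperm p then 1 else - 1)"

definition sdet :: "nat \<Rightarrow> 'a::linordered_ab_group_add smat \<Rightarrow> 'a smax" where
  "sdet n M = (\<Sum>p | p permutes {..<n}. psign p * (\<Prod>i<n. M i (p i)))"

definition skip :: "nat \<Rightarrow> nat \<Rightarrow> nat" where
  "skip k i = (if i < k then i else Suc i)"

definition sminor :: "'a smat \<Rightarrow> nat \<Rightarrow> nat \<Rightarrow> 'a smat" where
  "sminor M j i = (\<lambda>r c. M (skip j r) (skip i c))"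

definition sadj :: "nat \<Rightarrow> 'a::linordered_ab_group_add smat \<Rightarrow> 'a smat" where
  "sadj n M = (\<lambda>i j. (- 1) ^ (i + j) * sdet (n - 1) (sminor M j i))"

definition sident :: "'a::linordered_ab_group_add smat" where
  "sident = (\<lambda>i j. if i = j then 1 else 0)"

definition TPD :: "nat \<Rightarrow> 'a::linordered_ab_group_add smat \<Rightarrow> bool" where
  "TPD n A = ((\<forall>i<n. \<forall>j<n. A i j = A j i \<and> signed (A i j))
     \<and> (\<forall>i<n. slt 0 (A i i))
     \<and> (\<forall>i<n. \<forall>j<n. i \<noteq> j \<longrightarrow> slt ((A i j)^2) (A i i * A j j)))"

definition strong_eigenvector :: "nat \<Rightarrow> 'a::linordered_ab_group_add smat \<Rightarrow> 'a smax \<Rightarrow> (nat \<Rightarrow> 'a smax) \<Rightarrow> bool" where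
  "strong_eigenvector n A \<gamma> v =
     ((\<forall>i<n. signed (v i)) \<and> (\<exists>i<n. v i \<noteq> 0)
      \<and> (\<forall>i<n. (\<Sum>j<n. A i j * v j) = \<gamma> * v i))"

end

theory Submission
  imports Defs
begin

text \<open>Let B = \<gamma>I \<ominus> A with \<gamma> = a_00, and let v be a strong eigenvector for \<gamma>. Entry i of
  the first column of adj B is the sum, over the permutations p with p 0 = i, of
  sgn p \<Prod>_{r \<ge> 1} B_{r, p r}. Writing magnitudes additively, row r of A v = \<gamma> v bounds
  |B_{r, p r}| by \<gamma> + |v_r| - |v_{p r}| when v_r \<noteq> 0, so every term has magnitude at most
  (n-1) \<gamma> + |v_i| - |v_0|. If v_i = 0 every term vanishes, since p would map the zero set of v
  together with 0 injectively into that zero set. A term attains the bound only if every moved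
  row r is tight, a_{r, p r} v_{p r} = \<gamma> v_r; positive definiteness then makes |v_r|^2 / a_rr
  increase strictly along p, so p is a single cycle through 0 and the term has the sign
  sgn v_i sgn v_0. Because \<gamma> is simple, tight steps exist out of every r \<noteq> 0 in the support
  of v, and following them from i to 0 yields a term attaining the bound. Hence the entry is
  signed.\<close>

section \<open>Signed elements of the symmetrized tropical semiring\<close>

instance smax :: (linordered_ab_group_add) "{comm_semiring_1, semiring_no_zero_divisors}"
proof
  fix a b c :: "'a smax"
  show distrib: "(a + b) * c = a * c + b * c" for a b c :: "'a smax"
    unfolding plus_smax_def times_smax_def splus_def
    by (cases a; cases b; cases c) (auto simp: add_strict_right_mono)
  show "a * (b + c) = a * b + a * c"
    using distrib[of b c a] by (simp add: mult.commute)
  show "0 * a = 0" "a * 0 = 0"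
    unfolding zero_smax_def times_smax_def by (cases a; simp)+
  show "(0::'a smax) \<noteq> 1"
    unfolding zero_smax_def one_smax_def by simp
  show "a \<noteq> 0 \<Longrightarrow> b \<noteq> 0 \<Longrightarrow> a * b \<noteq> 0"
    unfolding zero_smax_def times_smax_def by (cases a; cases b) auto
qed

fun ssgn :: "'a smax \<Rightarrow> int" where
  "ssgn SZero = 0"
| "ssgn (SPos a) = 1"
| "ssgn (SNeg a) = -1"
| "ssgn (SBal a) = 0"

context
  fixes x y :: "'a::linordered_ab_group_add smax"
begin

lemma ssgn_mult: "ssgn (x * y) = ssgn x * ssgn y"
  by (cases x; cases y) (auto simp: times_smax_def)

lemma smag_mult: "x \<noteq> 0 \<Longrightarrow> y \<noteq> 0 \<Longrightarrow> smag (x * y) = smag x + smag y"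
  by (cases x; cases y) (auto simp: times_smax_def zero_smax_def)

lemma signed_mult: "signed x \<Longrightarrow> signed y \<Longrightarrow> signed (x * y)"
  by (cases x; cases y) (auto simp: times_smax_def signed_def)

lemma ssgn_uminus [simp]: "ssgn (- x) = - ssgn x"
  by (cases x) (auto simp: uminus_smax_def)

lemma smag_uminus [simp]: "smag (- x) = smag x"
  by (cases x) (auto simp: uminus_smax_def)

lemma signed_uminus [simp]: "signed (- x) = signed x"
  by (cases x) (auto simp: uminus_smax_def signed_def)

lemma uminus_smax_eq_0_iff [simp]: "- x = 0 \<longleftrightarrow> x = 0"
  by (cases x) (auto simp: uminus_smax_def zero_smax_def)

lemma signed_smax_eqI:
  "signed x \<Longrightarrow> signed y \<Longrightarrow> ssgn x = ssgn y \<Longrightarrow> smag x = smag y \<Longrightarrow> x = y"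
  by (cases x; cases y) (auto simp: signed_def)

lemma ssgn_square: "signed x \<Longrightarrow> x \<noteq> 0 \<Longrightarrow> ssgn x * ssgn x = 1"
  by (cases x) (auto simp: signed_def zero_smax_def)

lemma minus_minus_smax [simp]: "- (- x) = x"
  by (cases x) (auto simp: uminus_smax_def)

lemma minus_one_mult_smax [simp]: "- 1 * x = - x"
  by (cases x) (auto simp: uminus_smax_def one_smax_def times_smax_def)

lemma add_smax_idem [simp]: "x + x = x"
  by (simp add: plus_smax_def splus_def)

lemma sle_iff:
  assumes "signed x" "signed y" "y \<noteq> 0"
  shows "sle x y \<longleftrightarrow> x = 0 \<or> smag x < smag y \<or> x = y"
  using assms
  by (cases x; cases y) (auto simp: sle_def plus_smax_def splus_def signed_def zero_smax_def)

end

lemma signed_0 [simp]: "signed 0"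
  and signed_1 [simp]: "signed 1"
  and ssgn_1 [simp]: "ssgn (1::'a::linordered_ab_group_add smax) = 1"
  by (simp_all add: zero_smax_def one_smax_def signed_def)

lemma signed_smax_exists:
  assumes "s = 1 \<or> s = -1"
  obtains x :: "'a::linordered_ab_group_add smax"
  where "signed x" "x \<noteq> 0" "ssgn x = s" "smag x = m"
  using assms that[of "SPos m"] that[of "SNeg m"] by (auto simp: signed_def zero_smax_def)

lemma minus_one_power_smax:
  "(- 1 :: 'a::linordered_ab_group_add smax) ^ k = (if even k then 1 else - 1)"
  by (induction k) (auto simp: one_smax_def uminus_smax_def times_smax_def)

lemma psign_eq: "psign p = (if sign p = 1 then 1 else - 1)"
  by (simp add: psign_def sign_def)

lemma signed_psign [simp]: "signed (psign p)"
  and ssgn_psign [simp]: "ssgn (psign p :: 'a::linordered_ab_group_add smax) = sign p"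
  and smag_psign [simp]: "smag (psign p :: 'a::linordered_ab_group_add smax) = 0"
  and psign_neq_0 [simp]: "psign p \<noteq> 0"
  by (auto simp: psign_def sign_def one_smax_def uminus_smax_def signed_def zero_smax_def)

lemma signed_prod:
  fixes f :: "'b \<Rightarrow> 'a::linordered_ab_group_add smax"
  shows "finite S \<Longrightarrow> \<forall>s\<in>S. signed (f s) \<Longrightarrow> signed (prod f S)"
  by (induction S rule: finite_induct) (auto simp: signed_mult)

lemma ssgn_prod:
  fixes f :: "'b \<Rightarrow> 'a::linordered_ab_group_add smax"
  shows "finite S \<Longrightarrow> ssgn (prod f S) = (\<Prod>s\<in>S. ssgn (f s))"
  by (induction S rule: finite_induct) (auto simp: ssgn_mult)

lemma prod_smax_eq_0_iff:
  fixes f :: "'b \<Rightarrow> 'a::linordered_ab_group_add smax"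
  shows "finite S \<Longrightarrow> prod f S = 0 \<longleftrightarrow> (\<exists>s\<in>S. f s = 0)"
  by (induction S rule: finite_induct) auto

lemma smag_prod:
  fixes f :: "'b \<Rightarrow> 'a::linordered_ab_group_add smax"
  shows "finite S \<Longrightarrow> \<forall>s\<in>S. f s \<noteq> 0 \<Longrightarrow> smag (prod f S) = (\<Sum>s\<in>S. smag (f s))"
  by (induction S rule: finite_induct) (auto simp: smag_mult prod_smax_eq_0_iff one_smax_def)

lemma sle_add: "sle a c \<Longrightarrow> sle b c \<Longrightarrow> sle (a + b) c"
  unfolding sle_def by (metis add.assoc)

lemma sle_sum:
  fixes f :: "'b \<Rightarrow> 'a::linordered_ab_group_add smax"
  shows "finite S \<Longrightarrow> \<forall>s\<in>S. sle (f s) c \<Longrightarrow> sle (sum f S) c"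
  by (induction S rule: finite_induct) (auto simp: sle_add, simp add: sle_def)

lemma sle_summand:
  fixes f :: "'b \<Rightarrow> 'a::linordered_ab_group_add smax"
  assumes "finite S" "s \<in> S"
  shows "sle (f s) (sum f S)"
proof -
  have "sum f S = f s + sum f (S - {s})" using assms by (simp add: sum.remove)
  then show ?thesis unfolding sle_def by (metis add.assoc add_smax_idem)
qed

lemma sum_eq_attained_upper_bound:
  fixes f :: "'b \<Rightarrow> 'a::linordered_ab_group_add smax"
  assumes "finite S" "\<forall>s\<in>S. sle (f s) c" "s \<in> S" "f s = c"
  shows "sum f S = c"
proof -
  have "sle (sum f (S - {s})) c" using assms by (intro sle_sum) auto
  then show ?thesis using assms by (simp add: sum.remove sle_def add.commute)
qed

lemma smag_add_less:
  fixes x y :: "'a::linordered_ab_group_add smax"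
  assumes "x = 0 \<or> smag x < m" "y = 0 \<or> smag y < m"
  shows "x + y = 0 \<or> smag (x + y) < m"
  using assms by (cases x; cases y) (auto simp: plus_smax_def splus_def zero_smax_def)

lemma smag_sum_less:
  fixes f :: "'b \<Rightarrow> 'a::linordered_ab_group_add smax"
  shows "finite S \<Longrightarrow> \<forall>s\<in>S. f s = 0 \<or> smag (f s) < m \<Longrightarrow> sum f S = 0 \<or> smag (sum f S) < m"
  by (induction S rule: finite_induct) (simp_all add: smag_add_less)

section \<open>Permutations increasing a potential\<close>

definition increases_off :: "'b \<Rightarrow> ('b \<Rightarrow> 'c::linorder) \<Rightarrow> ('b \<Rightarrow> 'b) \<Rightarrow> bool" where
  "increases_off a y p \<longleftrightarrow> (\<forall>x. x \<noteq> a \<and> p x \<noteq> x \<longrightarrow> y x < y (p x))"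

lemma finite_moved_points: "finite S \<Longrightarrow> p permutes S \<Longrightarrow> finite {x. p x \<noteq> x}"
  by (metis (mono_tags, lifting) finite_subset mem_Collect_eq permutes_not_in subsetI)

lemma increases_off_fixing_imp_id:
  assumes "finite S" "p permutes S" "increases_off a y p" "p a = a"
  shows "p = id"
proof (rule ccontr)
  define M where "M = {x. p x \<noteq> x}"
  assume "p \<noteq> id"
  then have "M \<noteq> {}" by (auto simp: M_def)
  moreover have "finite M" using finite_moved_points assms(1,2) by (simp add: M_def)
  ultimately obtain x where x: "x \<in> M" and top: "\<And>x'. x' \<in> M \<Longrightarrow> y x' \<le> y x"
    using Max_in[of "y ` M"] Max_ge[of "y ` M"] by fastforce
  have "p x \<in> M"
    using x permutes_inj[OF assms(2)] by (auto simp: M_def dest: injD)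
  moreover have "y x < y (p x)"
    using x assms(3,4) by (auto simp: M_def increases_off_def)
  ultimately show False using top by (simp add: leD)
qed

text \<open>Such a permutation is a single cycle through a, or the identity.\<close>

lemma moved_points_after_swap:
  assumes "inj p" "p a \<noteq> a" "q (p a) = p a" "\<And>x. x \<noteq> a \<Longrightarrow> x \<noteq> p a \<Longrightarrow> q x = p x"
    and "finite {x. p x \<noteq> x}"
  shows "{x. q x \<noteq> x} \<subset> {x. p x \<noteq> x}"
    and "card ({x. p x \<noteq> x} - {a}) = Suc (card ({x. q x \<noteq> x} - {a}))"
proof -
  have pa: "p (p a) \<noteq> p a" using assms(1,2) by (simp add: inj_eq)
  have "{x. q x \<noteq> x} \<subseteq> {x. p x \<noteq> x}"
  proof
    fix x assume "x \<in> {x. q x \<noteq> x}"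
    then show "x \<in> {x. p x \<noteq> x}" using assms(2-4) by (cases "x = a"; cases "x = p a") auto
  qed
  then show "{x. q x \<noteq> x} \<subset> {x. p x \<noteq> x}" using assms(3) pa by auto
  have "{x. q x \<noteq> x} - {a} = ({x. p x \<noteq> x} - {a}) - {p a}"
  proof (rule set_eqI)
    fix x
    show "x \<in> {x. q x \<noteq> x} - {a} \<longleftrightarrow> x \<in> {x. p x \<noteq> x} - {a} - {p a}"
      using assms(3,4) by (cases "x = a"; cases "x = p a") auto
  qed
  moreover have "p a \<in> {x. p x \<noteq> x} - {a}" using pa assms(2) by simp
  ultimately show "card ({x. p x \<noteq> x} - {a}) = Suc (card ({x. q x \<noteq> x} - {a}))"
    using assms(5) by (metis card_Suc_Diff1 finite_Diff)
qed

lemma sign_increases_off: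
  assumes "finite S" "p permutes S" "increases_off a y p"
  shows "sign p = (-1) ^ card ({x. p x \<noteq> x} - {a})"
  using assms(2,3)
proof (induction "card {x. p x \<noteq> x}" arbitrary: p rule: less_induct)
  case less
  show ?case
  proof (cases "p a = a")
    case True
    then show ?thesis using increases_off_fixing_imp_id[OF assms(1) less.prems] by simp
  next
    case False
    define b where "b = p a"
    define q where "q = p \<circ> Transposition.transpose a b"
    have ab: "a \<noteq> b" using False by (simp add: b_def)
    have "a \<in> S" using permutes_not_in[OF less.prems(1)] False by blast
    moreover have "b \<in> S" using permutes_in_image[OF less.prems(1)] \<open>a \<in> S\<close> by (simp add: b_def)
    ultimately have q: "q permutes S" unfolding q_def
      by (intro permutes_compose permutes_swap_id less.prems(1))
    have qb: "q b = b" and q_other: "\<And>x. x \<noteq> a \<Longrightarrow> x \<noteq> b \<Longrightarrow> q x = p x"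
      by (simp_all add: q_def b_def)
    note moved = moved_points_after_swap[OF permutes_inj[OF less.prems(1)] False,
        of q, folded b_def, OF qb q_other finite_moved_points[OF assms(1) less.prems(1)]]
    have "sign p = - sign q"
    proof -
      have "p = q \<circ> Transposition.transpose a b" by (simp add: q_def comp_assoc)
      then show ?thesis
        using permutes_imp_permutation[OF assms(1) q] ab
        by (simp add: sign_compose permutation_swap_id sign_swap_id)
    qed
    moreover have "increases_off a y q"
      unfolding increases_off_def
    proof (intro allI impI)
      fix x assume x: "x \<noteq> a \<and> q x \<noteq> x"
      then have "x \<noteq> b" "q x = p x" using qb q_other by auto
      then show "y x < y (q x)" using less.prems(2) x by (simp add: increases_off_def)
    qed
    then have "sign q = (-1) ^ card ({x. q x \<noteq> x} - {a})"
      using less.hyps q psubset_card_mono[OF finite_moved_points[OF assms(1) less.prems(1)] moved(1)]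
      by simp
    ultimately show ?thesis using moved(2) by simp
  qed
qed

lemma sign_increases_off_cancels_parity:
  assumes "finite S" "p permutes S" "increases_off a y p"
  shows "sign p * (\<Prod>x\<in>S - {a}. if p x = x then 1 else -1) = 1"
proof -
  have "(S - {a}) \<inter> - {x. p x = x} = {x. p x \<noteq> x} - {a}"
    using permutes_not_in[OF assms(2)] by auto
  then have "(\<Prod>x\<in>S - {a}. if p x = x then 1 else -1 :: int) = (-1) ^ card ({x. p x \<noteq> x} - {a})"
    using prod.If_cases[of "S - {a}" "\<lambda>x. p x = x" "\<lambda>_. 1" "\<lambda>_. -1::int"] assms(1) by simp
  then show ?thesis using sign_increases_off[OF assms] by simp
qed

text \<open>Follow the steps x \<mapsto> f x from i; as y increases they reach a, and the cycle is closed
  by sending a to i.\<close>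

lemma permutation_along_increasing_steps:
  fixes y :: "'b \<Rightarrow> 'c::linorder"
  assumes "finite S" "a \<in> S" "i \<in> S" and f: "\<forall>x\<in>S - {a}. f x \<in> S \<and> y x < y (f x)"
  shows "\<exists>p. p permutes S \<and> p a = i \<and> (\<forall>x\<in>S - {a}. p x = x \<or> p x = f x)
    \<and> (\<forall>x. p x \<noteq> x \<longrightarrow> x = a \<or> y i \<le> y x)"
  using assms(3)
proof (induction "card {x\<in>S. y i < y x}" arbitrary: i rule: less_induct)
  case less
  show ?case
  proof (cases "i = a")
    case True
    then show ?thesis by (intro exI[of _ id]) simp
  next
    case False
    define j where "j = f i"
    have j: "j \<in> S" "y i < y j" using f less.prems False by (auto simp: j_def)
    have "{x\<in>S. y j < y x} \<subset> {x\<in>S. y i < y x}" using j by auto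
    then have "card {x\<in>S. y j < y x} < card {x\<in>S. y i < y x}"
      using assms(1) by (intro psubset_card_mono) auto
    then obtain q where q: "q permutes S" "q a = j" "\<forall>x\<in>S - {a}. q x = x \<or> q x = f x"
      and q_moved: "\<forall>x. q x \<noteq> x \<longrightarrow> x = a \<or> y j \<le> y x"
      using less.hyps j(1) by blast
    have qi: "q i = i" using q_moved False j(2) by (meson leD)
    define p where "p = q \<circ> Transposition.transpose a i"
    have "p permutes S"
      unfolding p_def using assms(2) less.prems by (intro permutes_compose permutes_swap_id q(1))
    moreover have "p a = i" "p i = f i" and p_other: "\<And>x. x \<noteq> a \<Longrightarrow> x \<noteq> i \<Longrightarrow> p x = q x"
      using qi q(2) by (simp_all add: p_def j_def)
    moreover have "p x = x \<or> p x = f x" if "x \<in> S - {a}" for x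
      using that q(3) p_other \<open>p i = f i\<close> by (cases "x = i") auto
    moreover have "x = a \<or> y i \<le> y x" if "p x \<noteq> x" for x
      using that q_moved p_other j(2) by (cases "x = a \<or> x = i") (auto dest: less_le_trans)
    ultimately show ?thesis by blast
  qed
qed

section \<open>The first column of the adjugate\<close>

definition rotation :: "nat \<Rightarrow> nat \<Rightarrow> nat" where
  "rotation i x = (if x = 0 then i else if x \<le> i then x - 1 else x)"

lemma rotation_permutes: "rotation i permutes {..i}"
proof (rule bij_imp_permutes)
  show "bij_betw (rotation i) {..i} {..i}"
    by (rule bij_betw_byWitness[where f'="\<lambda>x. if x = i then 0 else if x < i then x + 1 else x"])
       (auto simp: rotation_def)
qed (simp add: rotation_def)

lemma sign_rotation: "sign (rotation i) = (-1) ^ i"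
proof -
  have "increases_off 0 (\<lambda>x. - int x) (rotation i)"
    by (auto simp: increases_off_def rotation_def)
  then have "sign (rotation i) = (-1) ^ card ({x. rotation i x \<noteq> x} - {0})"
    using sign_increases_off[OF _ rotation_permutes] by blast
  moreover have "{x. rotation i x \<noteq> x} - {0} = {1..i}"
    by (auto simp: rotation_def)
  ultimately show ?thesis by simp
qed

text \<open>A permutation s of {..<n-1} indexes a term of the minor of row 0 and column i; the
  permutation cofactor_perm n i s of {..<n} places that term in the full matrix, sending 0 to i.\<close>

definition cofactor_perm :: "nat \<Rightarrow> nat \<Rightarrow> (nat \<Rightarrow> nat) \<Rightarrow> nat \<Rightarrow> nat" where
  "cofactor_perm n i s x = (if x = 0 then i else if x < n then skip i (s (x - 1)) else x)"

lemma skip_0: "skip 0 r = Suc r"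
  by (simp add: skip_def)

lemma cofactor_perm_0 [simp]: "cofactor_perm n i s 0 = i"
  by (simp add: cofactor_perm_def)

lemma
  assumes "i < n" "s permutes {..<n-1}"
  shows cofactor_perm_permutes: "cofactor_perm n i s permutes {..<n}"
    and sign_cofactor_perm: "sign (cofactor_perm n i s) = (-1) ^ i * sign s"
proof -
  interpret shifted: permutes_bij_finite s "{..<n-1}" "{1..<n}" Suc "\<lambda>x. x - 1"
    "\<lambda>x. if x \<in> {1..<n} then Suc (s (x - 1)) else x"
  proof unfold_locales
    show "bij_betw Suc {..<n - 1} {1..<n}"
      by (rule bij_betw_byWitness[where f'="\<lambda>x. x - 1"]) (use assms in auto)
  qed (use assms in simp_all)
  define shift where "shift x = (if x \<in> {1..<n} then Suc (s (x - 1)) else x)" for x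
  have shift: "shift permutes {..<n}"
    using shifted.permutes_p' unfolding shift_def by (rule permutes_subset) auto
  have sign_shift: "sign shift = sign s"
    using shifted.sign_p' unfolding shift_def by simp
  have rotation: "rotation i permutes {..<n}"
    using assms(1) by (intro permutes_subset[OF rotation_permutes]) auto
  have "cofactor_perm n i s = rotation i \<circ> shift"
  proof
    fix x
    have "s (x - 1) < n - 1" if "0 < x" "x < n"
      using that permutes_in_image[OF assms(2)] by simp
    then show "cofactor_perm n i s x = (rotation i \<circ> shift) x"
      using assms(1) by (auto simp: cofactor_perm_def shift_def rotation_def skip_def)
  qed
  then show "cofactor_perm n i s permutes {..<n}"
    and "sign (cofactor_perm n i s) = (-1) ^ i * sign s"
    using permutes_compose[OF shift rotation] sign_compose[of "rotation i" shift]
      permutes_imp_permutation[of "{..<n}"] shift rotation sign_rotation sign_shift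
    by simp_all
qed

lemma cofactor_perm_surj:
  assumes "i < n" "p permutes {..<n}" "p 0 = i"
  shows "\<exists>s. s permutes {..<n-1} \<and> cofactor_perm n i s = p"
proof -
  define s where "s r = (if r < n - 1 then (if p (Suc r) < i then p (Suc r) else p (Suc r) - 1) else r)"
    for r
  have inj: "inj p" using assms(2) permutes_inj by blast
  have p_less: "\<And>x. x < n \<Longrightarrow> p x < n" using permutes_in_image[OF assms(2)] by simp
  have p_neq_i: "\<And>r. p (Suc r) \<noteq> i" using assms(3) inj_eq[OF inj] by (metis nat.distinct(1))
  have s_less: "s r < n - 1" if "r < n - 1" for r
  proof -
    have "p (Suc r) < n" using that p_less by simp
    then show ?thesis using that p_neq_i[of r] assms(1) unfolding s_def by auto
  qed
  have "inj_on s {..<n-1}"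
  proof (rule inj_onI)
    fix x y assume xy: "x \<in> {..<n-1}" "y \<in> {..<n-1}" "s x = s y"
    have "p (Suc x) = p (Suc y)"
      using xy p_neq_i[of x] p_neq_i[of y] unfolding s_def by (auto split: if_splits)
    then show "x = y" using inj by (simp add: inj_eq)
  qed
  moreover have "s ` {..<n-1} = {..<n-1}"
    using calculation s_less by (intro endo_inj_surj) auto
  ultimately have "s permutes {..<n-1}"
    by (intro bij_imp_permutes) (auto simp: bij_betw_def s_def)
  moreover have "cofactor_perm n i s = p"
  proof
    fix x
    show "cofactor_perm n i s x = p x"
    proof (cases "0 < x \<and> x < n")
      case True
      then obtain r where "x = Suc r" "r < n - 1" by (cases x) auto
      then show ?thesis using p_neq_i[of r] unfolding cofactor_perm_def s_def skip_def by auto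
    next
      case False
      then show ?thesis using assms(2,3) by (auto simp: cofactor_perm_def permutes_not_in)
    qed
  qed
  ultimately show ?thesis by blast
qed

lemma inj_on_cofactor_perm: "inj_on (cofactor_perm n i) {s. s permutes {..<n-1}}"
proof (rule inj_onI)
  fix s t assume s: "s \<in> {s. s permutes {..<n-1}}" and t: "t \<in> {s. s permutes {..<n-1}}"
    and eq: "cofactor_perm n i s = cofactor_perm n i t"
  show "s = t"
  proof
    fix r
    show "s r = t r"
    proof (cases "r < n - 1")
      case True
      then have "skip i (s r) = skip i (t r)"
        using fun_cong[OF eq, of "Suc r"] by (simp add: cofactor_perm_def less_diff_conv)
      then show ?thesis by (auto simp: skip_def split: if_splits)
    next
      case False
      then show ?thesis using s t by (simp add: permutes_not_in)
    qed
  qed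
qed

lemma bij_betw_cofactor_perm:
  assumes "i < n"
  shows "bij_betw (cofactor_perm n i) {s. s permutes {..<n-1}} {p. p permutes {..<n} \<and> p 0 = i}"
  unfolding bij_betw_def
proof
  show "cofactor_perm n i ` {s. s permutes {..<n-1}} = {p. p permutes {..<n} \<and> p 0 = i}"
  proof (intro set_eqI iffI)
    fix p assume "p \<in> cofactor_perm n i ` {s. s permutes {..<n-1}}"
    then show "p \<in> {p. p permutes {..<n} \<and> p 0 = i}"
      using cofactor_perm_permutes[OF assms] by auto
  next
    fix p assume "p \<in> {p. p permutes {..<n} \<and> p 0 = i}"
    then obtain s where "s permutes {..<n-1}" "cofactor_perm n i s = p"
      using cofactor_perm_surj[OF assms] by blast
    then show "p \<in> cofactor_perm n i ` {s. s permutes {..<n-1}}" by blast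
  qed
qed (rule inj_on_cofactor_perm)

lemma psign_cofactor_perm:
  assumes "i < n" "s permutes {..<n-1}"
  shows "psign (cofactor_perm n i s) = (- 1) ^ i * (psign s :: 'a::linordered_ab_group_add smax)"
  using sign_cofactor_perm[OF assms] sign_cases[of s]
  by (cases "even i") (auto simp: psign_eq minus_one_power_smax)

lemma sadj_col0_eq:
  fixes M :: "'a::linordered_ab_group_add smat"
  assumes "i < n"
  shows "sadj n M i 0 = (\<Sum>p | p permutes {..<n} \<and> p 0 = i. psign p * (\<Prod>r\<in>{1..<n}. M r (p r)))"
proof -
  have prod: "(\<Prod>r<n-1. M (Suc r) (skip i (s r))) = (\<Prod>r\<in>{1..<n}. M r (cofactor_perm n i s r))"
    for s
  proof -
    have "(\<Prod>r<n-1. M (Suc r) (skip i (s r))) = (\<Prod>r<n-1. M (Suc r) (cofactor_perm n i s (Suc r)))"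
      by (intro prod.cong) (auto simp: cofactor_perm_def)
    also have "\<dots> = (\<Prod>r\<in>{1..<n}. M r (cofactor_perm n i s r))"
      using prod.shift_bounds_Suc_ivl[of "\<lambda>r. M r (cofactor_perm n i s r)" 0 "n - 1"] assms
      by (simp add: lessThan_atLeast0)
    finally show ?thesis .
  qed
  have "sadj n M i 0 =
      (\<Sum>s | s permutes {..<n-1}. (- 1) ^ i * psign s * (\<Prod>r<n-1. M (Suc r) (skip i (s r))))"
    by (simp add: sadj_def sdet_def sminor_def skip_0 sum_distrib_left mult.assoc)
  also have "\<dots> = (\<Sum>s | s permutes {..<n-1}. psign (cofactor_perm n i s) *
      (\<Prod>r\<in>{1..<n}. M r (cofactor_perm n i s r)))"
    by (intro sum.cong refl) (simp only: mem_Collect_eq prod psign_cofactor_perm[OF assms])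
  also have "\<dots> = (\<Sum>p | p permutes {..<n} \<and> p 0 = i. psign p * (\<Prod>r\<in>{1..<n}. M r (p r)))"
    using sum.reindex_bij_betw[OF bij_betw_cofactor_perm[OF assms]] .
  finally show ?thesis .
qed

section \<open>Strong eigenvectors for the simple top eigenvalue\<close>

lemma less_if_double_less_add:
  fixes a g x z :: "'a::linordered_ab_group_add"
  assumes "a + a < x + z" "x \<le> g" "z \<le> g"
  shows "a < g"
proof (rule ccontr)
  assume "\<not> a < g"
  then have "x + z \<le> a + a" using assms(2,3) by (meson add_mono not_less order_trans)
  then show False using assms(1) by simp
qed

lemma double_diff_less_double_diff:
  fixes a g wr wc dr dc :: "'a::linordered_ab_group_add"
  assumes "a + a < dr + dc" "a + wc = g + wr" "dc \<le> g"
  shows "wr + wr - dr < wc + wc - dc"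
proof -
  have "a + a + dc < dr + dc + dc" using assms(1) by (rule add_strict_right_mono)
  also have "\<dots> \<le> dr + g + g" using assms(3) by (simp add: add_mono add.assoc)
  finally have "a + a + dc < dr + g + g" .
  moreover have wr: "wr = a + wc - g" using assms(2) by (simp add: algebra_simps)
  ultimately show ?thesis unfolding wr by (simp add: algebra_simps)
qed

locale tpd_eigenvector =
  fixes A :: "'a::linordered_ab_group_add smat" and n :: nat and v :: "nat \<Rightarrow> 'a smax"
  assumes n_pos: "1 \<le> n"
    and tpd: "TPD n A"
    and diag_sorted: "\<forall>i j. i \<le> j \<and> j < n \<longrightarrow> sle (A j j) (A i i)"
    and top_simple: "n \<ge> 2 \<longrightarrow> sgt (A 0 0) (A 1 1)"
    and eigenvector: "strong_eigenvector n A (A 0 0) v"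
begin

text \<open>Magnitudes are written additively: g, d r and w r are the magnitudes of \<gamma> = a_00, a_rr
  and v_r, and height r is that of v_r^2 / a_rr.\<close>

definition "g = smag (A 0 0)"
definition "d r = smag (A r r)"
definition "w r = smag (v r)"
definition "height r = w r + w r - d r"
definition "B = (\<lambda>i j. A 0 0 * sident i j \<ominus> A i j)"
definition "Z = {c. c < n \<and> v c = 0}"
definition "R = {1..<n}"

lemma A_diag: "r < n \<Longrightarrow> A r r = SPos (d r)"
proof -
  assume "r < n"
  then have "slt 0 (A r r)" using tpd unfolding TPD_def by blast
  then have "spositive (A r r)"
    by (simp add: slt_def sdiff_def uminus_smax_def zero_smax_def plus_smax_def splus_def
        split: if_splits)
  then show ?thesis unfolding spositive_def d_def by auto
qed

lemma A_00: "A 0 0 = SPos g"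
  using A_diag[of 0] n_pos by (simp add: g_def d_def)

lemma A_00_neq_0 [simp]: "A 0 0 \<noteq> 0"
  by (simp add: A_00 zero_smax_def)

lemma signed_A_00 [simp]: "signed (A 0 0)"
  by (simp add: A_00 signed_def)

lemma d_le_g: "r < n \<Longrightarrow> d r \<le> g"
proof -
  assume r: "r < n"
  then have "sle (A r r) (A 0 0)" using diag_sorted by simp
  then show ?thesis using A_diag[OF r] A_00
    by (auto simp: sle_def plus_smax_def splus_def split: if_splits)
qed

lemma d_less_g: "1 \<le> r \<Longrightarrow> r < n \<Longrightarrow> d r < g"
proof -
  assume r: "1 \<le> r" "r < n"
  have "sle (A r r) (A 1 1)" using diag_sorted r by simp
  then have "d r \<le> d 1" using A_diag[OF r(2)] A_diag[of 1] r
    by (auto simp: sle_def plus_smax_def splus_def split: if_splits)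
  moreover have "sgt (A 0 0) (A 1 1)" using top_simple r by simp
  then have "d 1 < g" using A_diag[of 1] r A_00
    by (auto simp: sgt_def sle_def plus_smax_def splus_def split: if_splits)
  ultimately show ?thesis by simp
qed

lemma A_signed: "r < n \<Longrightarrow> c < n \<Longrightarrow> signed (A r c)"
  using tpd unfolding TPD_def by blast

lemma A_offdiag_bound:
  assumes "r < n" "c < n" "r \<noteq> c" "A r c \<noteq> 0"
  shows "smag (A r c) + smag (A r c) < d r + d c"
proof -
  have "slt ((A r c)\<^sup>2) (A r r * A c c)" using tpd assms unfolding TPD_def by blast
  then show ?thesis using A_signed[of r c] A_diag[of r] A_diag[of c] assms
    by (cases "A r c")
       (auto simp: slt_def sdiff_def spositive_def power2_eq_square times_smax_def
          uminus_smax_def plus_smax_def splus_def zero_smax_def signed_def split: if_splits)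
qed

lemma smag_A_less_g: "r < n \<Longrightarrow> c < n \<Longrightarrow> r \<noteq> c \<Longrightarrow> A r c \<noteq> 0 \<Longrightarrow> smag (A r c) < g"
  using less_if_double_less_add[OF A_offdiag_bound d_le_g d_le_g] by blast

lemma B_diag: "1 \<le> r \<Longrightarrow> r < n \<Longrightarrow> B r r = SPos g"
  using d_less_g[of r] A_diag[of r] A_00
  by (simp add: B_def sident_def sdiff_def one_smax_def times_smax_def uminus_smax_def
      plus_smax_def splus_def)

lemma B_offdiag: "r \<noteq> c \<Longrightarrow> B r c = - A r c"
  by (simp add: B_def sident_def sdiff_def)

lemma B_signed: "1 \<le> r \<Longrightarrow> r < n \<Longrightarrow> c < n \<Longrightarrow> signed (B r c)"
  by (cases "r = c") (simp_all add: B_diag B_offdiag A_signed, simp add: signed_def)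

lemma v_signed: "c < n \<Longrightarrow> signed (v c)"
  using eigenvector unfolding strong_eigenvector_def by blast

lemma ssgn_v_square: "c < n \<Longrightarrow> v c \<noteq> 0 \<Longrightarrow> ssgn (v c) * ssgn (v c) = 1"
  using ssgn_square v_signed by blast

lemma eigen_row: "r < n \<Longrightarrow> (\<Sum>j<n. A r j * v j) = A 0 0 * v r"
  using eigenvector unfolding strong_eigenvector_def by blast

lemma eigen_summand_le: "r < n \<Longrightarrow> c < n \<Longrightarrow> sle (A r c * v c) (A 0 0 * v r)"
  using sle_summand[of "{..<n}" c "\<lambda>j. A r j * v j"] eigen_row[of r] by simp

lemma eigen_zero_row: "r < n \<Longrightarrow> v r = 0 \<Longrightarrow> c < n \<Longrightarrow> A r c \<noteq> 0 \<Longrightarrow> v c = 0"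
  using eigen_summand_le[of r c] by (simp add: sle_def)

lemma eigen_summand_cases:
  assumes "r < n" "c < n" "v r \<noteq> 0"
  shows "A r c * v c = 0 \<or> smag (A r c * v c) < g + w r \<or> A r c * v c = A 0 0 * v r"
proof -
  have "smag (A 0 0 * v r) = g + w r" using assms(3) by (simp add: smag_mult w_def g_def)
  moreover have "signed (A r c * v c)" "signed (A 0 0 * v r)"
    using A_signed[OF assms(1,2)] v_signed assms(1,2) by (simp_all add: signed_mult)
  ultimately show ?thesis
    using sle_iff[of "A r c * v c" "A 0 0 * v r"] eigen_summand_le[OF assms(1,2)] assms(3) by simp
qed

lemma tight_step_exists:
  assumes r: "1 \<le> r" "r < n" and vr: "v r \<noteq> 0"
  shows "\<exists>c<n. c \<noteq> r \<and> A r c * v c = A 0 0 * v r"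
proof (rule ccontr)
  assume no_tight: "\<not> ?thesis"
  have "A r j * v j = 0 \<or> smag (A r j * v j) < g + w r" if j: "j < n" for j
  proof (cases "j = r")
    case True
    have "smag (A r j * v j) = d r + w r"
      using True A_diag[OF r(2)] vr by (simp add: smag_mult w_def zero_smax_def)
    then show ?thesis using d_less_g[OF r] by simp
  next
    case False
    then show ?thesis using eigen_summand_cases[OF r(2) j vr] no_tight j by auto
  qed
  then have "(\<Sum>j<n. A r j * v j) = 0 \<or> smag (\<Sum>j<n. A r j * v j) < g + w r"
    by (intro smag_sum_less) auto
  then show False using eigen_row[OF r(2)] vr by (simp add: smag_mult w_def g_def)
qed

text \<open>Positive definiteness makes the height strictly increase along every tight step.\<close>

lemma tight_step:
  assumes "r < n" "c < n" "r \<noteq> c" and tight: "A r c * v c = A 0 0 * v r" and "v r \<noteq> 0"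
  shows "v c \<noteq> 0" "A r c \<noteq> 0" "smag (A r c) + w c = g + w r"
    and "ssgn (A r c) * ssgn (v c) = ssgn (v r)" "height r < height c"
proof -
  have "A r c * v c \<noteq> 0" using tight assms(5) by simp
  then show nz: "v c \<noteq> 0" "A r c \<noteq> 0" by auto
  show balance: "smag (A r c) + w c = g + w r"
    using arg_cong[OF tight, of smag] nz assms(5)
    by (simp add: smag_mult w_def A_00 zero_smax_def)
  show "ssgn (A r c) * ssgn (v c) = ssgn (v r)"
    using arg_cong[OF tight, of ssgn] by (simp add: ssgn_mult A_00)
  show "height r < height c" unfolding height_def
    by (rule double_diff_less_double_diff[OF A_offdiag_bound[OF assms(1-3) nz(2)] balance
          d_le_g[OF assms(2)]])
qed

text \<open>A point of maximal height in the support of v admits no tight step, so it is 0.\<close>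

lemma v_0_nonzero: "v 0 \<noteq> 0"
proof -
  define N where "N = {c. c < n \<and> v c \<noteq> 0}"
  have "finite N" "N \<noteq> {}"
    using eigenvector unfolding strong_eigenvector_def N_def by auto
  then obtain x where x: "x \<in> N" and top: "\<And>c. c \<in> N \<Longrightarrow> height c \<le> height x"
    using Max_in[of "height ` N"] Max_ge[of "height ` N"] by fastforce
  show ?thesis
  proof (cases "x = 0")
    case True
    then show ?thesis using x by (simp add: N_def)
  next
    case False
    then obtain c where c: "c < n" "c \<noteq> x" "A x c * v c = A 0 0 * v x"
      using tight_step_exists[of x] x by (auto simp: N_def)
    then have "c \<in> N" "height x < height c"
      using tight_step[of x c] x by (auto simp: N_def)
    then show ?thesis using top by (simp add: leD)
  qed
qed

lemma B_tight_entry: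
  assumes "r < n" "c < n" "r \<noteq> c" and tight: "A r c * v c = A 0 0 * v r" and "v r \<noteq> 0"
  shows "B r c \<noteq> 0" "smag (B r c) = g + w r - w c"
    and "ssgn (B r c) = - (ssgn (v r) * ssgn (v c))"
proof -
  note step = tight_step[OF assms]
  show "B r c \<noteq> 0" "smag (B r c) = g + w r - w c"
    using step(2,3) assms(3) by (simp_all add: B_offdiag eq_diff_eq)
  have "ssgn (A r c) = ssgn (A r c) * (ssgn (v c) * ssgn (v c))"
    using ssgn_v_square[OF assms(2) step(1)] by simp
  also have "\<dots> = ssgn (v r) * ssgn (v c)" using step(4) by (simp add: mult.assoc[symmetric])
  finally show "ssgn (B r c) = - (ssgn (v r) * ssgn (v c))"
    using assms(3) by (simp add: B_offdiag)
qed

definition "P p = (\<Prod>r\<in>R. B r (p r))"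

text \<open>Row r of the eigen-equation bounds the magnitude of B r (p r) by bnd p r; for a
  permutation preserving Z these bounds add up to K i.\<close>

definition "bnd p r = (if r \<in> Z then g else g + w r - w (p r))"
definition "K i = (\<Sum>r\<in>R. g) + w i - w 0"

lemma perm_less: "p permutes {..<n} \<Longrightarrow> x < n \<Longrightarrow> p x < n"
  using permutes_in_image[of p "{..<n}" x] by simp

lemma B_perm_signed: "p permutes {..<n} \<Longrightarrow> r \<in> R \<Longrightarrow> signed (B r (p r))"
  using B_signed perm_less by (simp add: R_def)

lemma signed_P: "p permutes {..<n} \<Longrightarrow> signed (P p)"
  unfolding P_def by (intro signed_prod) (auto simp: R_def B_perm_signed)

lemma ssgn_P: "ssgn (P p) = (\<Prod>r\<in>R. ssgn (B r (p r)))"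
  unfolding P_def by (simp add: ssgn_prod R_def)

lemma P_eq_0_iff: "P p = 0 \<longleftrightarrow> (\<exists>r\<in>R. B r (p r) = 0)"
  unfolding P_def by (simp add: prod_smax_eq_0_iff R_def)

lemma smag_P: "P p \<noteq> 0 \<Longrightarrow> smag (P p) = (\<Sum>r\<in>R. smag (B r (p r)))"
  unfolding P_def by (simp add: smag_prod prod_smax_eq_0_iff R_def)

lemma B_entry_bound:
  assumes pp: "p permutes {..<n}" and r: "r \<in> R" and nz: "B r (p r) \<noteq> 0"
    and closed: "r \<notin> Z \<Longrightarrow> p r \<notin> Z"
  shows "smag (B r (p r)) \<le> bnd p r \<and> (smag (B r (p r)) = bnd p r \<longrightarrow>
     (r \<in> Z \<longrightarrow> p r = r) \<and>
     (r \<notin> Z \<longrightarrow> ssgn (B r (p r)) = ssgn (v r) * ssgn (v (p r)) * (if p r = r then 1 else -1)) \<and>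
     (p r \<noteq> r \<longrightarrow> height r < height (p r)))"
proof -
  have r1: "1 \<le> r" "r < n" using r by (auto simp: R_def)
  define c where "c = p r"
  have c: "c < n" using perm_less[OF pp r1(2)] by (simp add: c_def)
  show ?thesis
  proof (cases "c = r")
    case True
    have "r \<notin> Z \<Longrightarrow> ssgn (v r) * ssgn (v r) = 1" using ssgn_v_square[OF r1(2)] by (simp add: Z_def r1)
    then show ?thesis using True B_diag[OF r1] by (auto simp: bnd_def c_def)
  next
    case False
    have Anz: "A r c \<noteq> 0" using nz False by (simp add: c_def B_offdiag)
    show ?thesis
    proof (cases "r \<in> Z")
      case True
      have "smag (A r c) < g" using smag_A_less_g[OF r1(2) c _ Anz] False by simp
      then show ?thesis using True False by (auto simp: bnd_def c_def B_offdiag)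
    next
      case rZ: False
      have vr: "v r \<noteq> 0" using rZ r1 by (simp add: Z_def)
      have vc: "v c \<noteq> 0" using closed[OF rZ] c by (simp add: Z_def c_def)
      show ?thesis
        using eigen_summand_cases[OF r1(2) c vr]
      proof (elim disjE)
        assume "A r c * v c = 0" then show ?thesis using Anz vc by simp
      next
        assume "smag (A r c * v c) < g + w r"
        then have "smag (A r c) + w c < g + w r"
          using Anz vc by (simp add: smag_mult w_def)
        then have "smag (A r c) < g + w r - w c" by (simp add: less_diff_eq)
        then show ?thesis using rZ False by (auto simp: bnd_def c_def B_offdiag)
      next
        assume "A r c * v c = A 0 0 * v r"
        note tight = B_tight_entry[OF r1(2) c False[symmetric] this vr]
          tight_step(5)[OF r1(2) c False[symmetric] this vr]
        then show ?thesis using rZ False by (simp add: bnd_def c_def)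
      qed
    qed
  qed
qed

lemma perm_maps_Z:
  assumes pp: "p permutes {..<n}" and nz: "\<forall>r\<in>R. B r (p r) \<noteq> 0" and rZ: "r \<in> Z"
  shows "p r \<in> Z"
proof (cases "p r = r")
  case False
  have r: "r < n" "v r = 0" using rZ by (auto simp: Z_def)
  then have "1 \<le> r" using v_0_nonzero by (cases r) auto
  then have "B r (p r) \<noteq> 0" using nz r by (simp add: R_def)
  then have "A r (p r) \<noteq> 0" using False by (simp add: B_offdiag)
  then have "v (p r) = 0" using eigen_zero_row[OF r perm_less[OF pp r(1)]] by simp
  then show ?thesis using perm_less[OF pp r(1)] by (simp add: Z_def)
qed (use rZ in simp)

lemma perm_image_Z:
  assumes pp: "p permutes {..<n}" and nz: "\<forall>r\<in>R. B r (p r) \<noteq> 0"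
  shows "p ` Z = Z"
proof (rule endo_inj_surj)
  show "p ` Z \<subseteq> Z" using perm_maps_Z[OF pp nz] by auto
  show "inj_on p Z" using permutes_inj[OF pp] by (rule inj_on_subset) simp
qed (simp add: Z_def)

text \<open>If v i = 0, a nonzero term would map Z \<union> {0} injectively into Z.\<close>

lemma P_eq_0_if_v_zero:
  assumes i: "i < n" "v i = 0" and pp: "p permutes {..<n}" and p0: "p 0 = i"
  shows "P p = 0"
proof (rule ccontr)
  assume "P p \<noteq> 0"
  then have nz: "\<forall>r\<in>R. B r (p r) \<noteq> 0" by (simp add: P_eq_0_iff)
  have fin: "finite Z" by (simp add: Z_def)
  have sub: "p ` insert 0 Z \<subseteq> Z" using perm_maps_Z[OF pp nz] p0 i by (auto simp: Z_def)
  have "0 \<notin> Z" using v_0_nonzero by (simp add: Z_def)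
  moreover have "inj_on p (insert 0 Z)" using permutes_inj[OF pp] by (rule inj_on_subset) simp
  ultimately have "card (p ` insert 0 Z) = card Z + 1" using fin by (simp add: card_image)
  moreover have "card (p ` insert 0 Z) \<le> card Z" using card_mono[OF fin sub] .
  ultimately show False by simp
qed

definition "supp = {..<n} - Z"

lemma finite_supp: "finite supp"
  by (simp add: supp_def)

lemma in_supp_iff: "i \<in> supp \<longleftrightarrow> i < n \<and> v i \<noteq> 0"
  by (auto simp: supp_def Z_def)

lemma zero_in_supp: "0 \<in> supp"
  using v_0_nonzero n_pos by (simp add: in_supp_iff)

lemma R_diff_Z: "R - Z = supp - {0}"
  by (auto simp: R_def supp_def Z_def)

lemma perm_image_supp:
  assumes pp: "p permutes {..<n}" and p0: "p 0 = i" and pZ: "p ` Z = Z"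
  shows "p ` (supp - {0}) = supp - {i}"
proof -
  have inj: "inj p" using permutes_inj[OF pp] .
  have "p ` (supp - {0}) = p ` supp - p ` {0}" by (rule image_set_diff[OF inj])
  also have "p ` supp = p ` {..<n} - p ` Z" unfolding supp_def by (rule image_set_diff[OF inj])
  also have "p ` {..<n} = {..<n}" by (rule permutes_image[OF pp])
  finally show ?thesis using pZ p0 by (simp add: supp_def)
qed

lemma sum_bnd:
  assumes i: "i < n" "v i \<noteq> 0" and pp: "p permutes {..<n}" and p0: "p 0 = i" and pZ: "p ` Z = Z"
  shows "(\<Sum>r\<in>R. bnd p r) = K i"
proof -
  define h where "h r = (if r \<in> Z then 0 else w r - w (p r))" for r
  have "(\<Sum>r\<in>R. bnd p r) = (\<Sum>r\<in>R. g + h r)"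
    by (rule sum.cong) (auto simp: bnd_def h_def)
  also have "\<dots> = (\<Sum>r\<in>R. g) + (\<Sum>r\<in>R - Z. h r)"
    by (simp add: sum.distrib, rule sum.mono_neutral_right) (auto simp: R_def h_def)
  also have "(\<Sum>r\<in>R - Z. h r) = (\<Sum>r\<in>supp - {0}. w r) - (\<Sum>r\<in>supp - {0}. w (p r))"
    unfolding R_diff_Z by (simp add: h_def supp_def sum_subtractf)
  also have "(\<Sum>r\<in>supp - {0}. w (p r)) = (\<Sum>r\<in>supp - {i}. w r)"
  proof -
    have "inj_on p (supp - {0})" using permutes_inj[OF pp] by (rule inj_on_subset) simp
    then show ?thesis using perm_image_supp[OF pp p0 pZ] sum.reindex[of p "supp - {0}" w] by simp
  qed
  also have "(\<Sum>r\<in>supp - {0}. w r) = (\<Sum>r\<in>supp. w r) - w 0"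
    using sum_diff1[OF finite_supp, of w 0] zero_in_supp by simp
  also have "(\<Sum>r\<in>supp - {i}. w r) = (\<Sum>r\<in>supp. w r) - w i"
    using sum_diff1[OF finite_supp, of w i] i by (simp add: in_supp_iff)
  finally show ?thesis by (simp add: K_def algebra_simps)
qed

lemma prod_ssgn_v_along_perm:
  assumes i: "i < n" "v i \<noteq> 0" and pp: "p permutes {..<n}" and p0: "p 0 = i" and pZ: "p ` Z = Z"
  shows "(\<Prod>r\<in>supp - {0}. ssgn (v r) * ssgn (v (p r))) = ssgn (v 0) * ssgn (v i)"
proof -
  define sv where "sv r = ssgn (v r)" for r
  define Q where "Q = (\<Prod>r\<in>supp. sv r)"
  have sq: "r \<in> supp \<Longrightarrow> sv r * sv r = 1" for r
    using ssgn_v_square by (simp add: sv_def in_supp_iff)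
  have remove: "(\<Prod>r\<in>supp - {a}. sv r) = sv a * Q" if "a \<in> supp" for a
  proof -
    have "Q = sv a * (\<Prod>r\<in>supp - {a}. sv r)"
      unfolding Q_def using that finite_supp by (simp add: prod.remove)
    then show ?thesis using sq[OF that] by (simp add: mult.assoc[symmetric])
  qed
  have "Q * Q = 1"
    unfolding Q_def prod.distrib[symmetric] using sq by (intro prod.neutral) auto
  have "inj_on p (supp - {0})" using permutes_inj[OF pp] by (rule inj_on_subset) simp
  then have "(\<Prod>r\<in>supp - {0}. sv r * sv (p r)) = (\<Prod>r\<in>supp - {0}. sv r) * (\<Prod>r\<in>supp - {i}. sv r)"
    using perm_image_supp[OF pp p0 pZ] prod.reindex[of p "supp - {0}" sv]
    by (simp add: prod.distrib)
  also have "\<dots> = sv 0 * sv i"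
    using remove[OF zero_in_supp] remove[of i] i \<open>Q * Q = 1\<close> by (simp add: in_supp_iff algebra_simps)
  finally show ?thesis by (simp add: sv_def)
qed

text \<open>For a term of maximal magnitude the off-diagonal entries of B contribute one factor -1 per
  moved row, which cancels the sign of the single cycle p; the signs of v telescope along it.\<close>

lemma sign_tight_perm:
  assumes i: "i < n" "v i \<noteq> 0" and pp: "p permutes {..<n}" and p0: "p 0 = i" and pZ: "p ` Z = Z"
    and fixes_Z: "\<forall>r\<in>R \<inter> Z. p r = r"
    and ssgn_B: "\<forall>r\<in>R - Z. ssgn (B r (p r)) = ssgn (v r) * ssgn (v (p r)) * (if p r = r then 1 else -1)"
    and increasing: "\<forall>r\<in>R. p r \<noteq> r \<longrightarrow> height r < height (p r)"
  shows "sign p * (\<Prod>r\<in>R. ssgn (B r (p r))) = ssgn (v i) * ssgn (v 0)"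
proof -
  define eps where "eps r = (if p r = r then 1 else -1::int)" for r
  define hh where "hh r = (if r \<in> Z then 1 else ssgn (v r) * ssgn (v (p r)))" for r
  have "(\<Prod>r\<in>R. ssgn (B r (p r))) = (\<Prod>r\<in>R. eps r * hh r)"
  proof (rule prod.cong)
    fix r assume r: "r \<in> R"
    show "ssgn (B r (p r)) = eps r * hh r"
      using fixes_Z ssgn_B B_diag[of r] r by (cases "r \<in> Z") (simp_all add: eps_def hh_def R_def)
  qed simp
  also have "\<dots> = (\<Prod>r\<in>R. eps r) * (\<Prod>r\<in>R. hh r)" by (simp add: prod.distrib)
  also have "(\<Prod>r\<in>R. hh r) = (\<Prod>r\<in>R - Z. hh r)"
    by (rule prod.mono_neutral_right) (auto simp: R_def hh_def)
  also have "\<dots> = ssgn (v 0) * ssgn (v i)"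
    unfolding R_diff_Z prod_ssgn_v_along_perm[OF i pp p0 pZ, symmetric]
    by (rule prod.cong) (auto simp: hh_def supp_def)
  finally have "(\<Prod>r\<in>R. ssgn (B r (p r))) = (\<Prod>r\<in>R. eps r) * (ssgn (v 0) * ssgn (v i))" .
  moreover have "sign p * (\<Prod>r\<in>R. eps r) = 1"
  proof -
    have "increases_off 0 height p"
      using increasing permutes_not_in[OF pp] by (auto simp: increases_off_def R_def)
    moreover have "{..<n} - {0} = R" by (auto simp: R_def)
    ultimately show ?thesis
      using sign_increases_off_cancels_parity[OF _ pp, of 0 height] by (simp add: eps_def)
  qed
  ultimately show ?thesis by (simp add: algebra_simps)
qed

lemma nonzero_P_preserves_Z:
  assumes "p permutes {..<n}" "P p \<noteq> 0"
  shows "p ` Z = Z"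
  using perm_image_Z assms by (simp add: P_eq_0_iff)

lemma nonzero_P_entry_bound:
  assumes pp: "p permutes {..<n}" and nz: "P p \<noteq> 0" and r: "r \<in> R"
  shows "smag (B r (p r)) \<le> bnd p r \<and> (smag (B r (p r)) = bnd p r \<longrightarrow>
     (r \<in> Z \<longrightarrow> p r = r) \<and>
     (r \<notin> Z \<longrightarrow> ssgn (B r (p r)) = ssgn (v r) * ssgn (v (p r)) * (if p r = r then 1 else -1)) \<and>
     (p r \<noteq> r \<longrightarrow> height r < height (p r)))"
proof (rule B_entry_bound[OF pp r])
  show "B r (p r) \<noteq> 0" using nz r by (simp add: P_eq_0_iff)
  show "p r \<notin> Z" if "r \<notin> Z"
    using that nonzero_P_preserves_Z[OF pp nz] inj_image_mem_iff[OF permutes_inj[OF pp]] by metis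
qed

lemma smag_P_le_K:
  assumes i: "i < n" "v i \<noteq> 0" and pp: "p permutes {..<n}" and p0: "p 0 = i" and nz: "P p \<noteq> 0"
  shows "smag (P p) \<le> K i"
proof -
  have "smag (P p) \<le> (\<Sum>r\<in>R. bnd p r)"
    unfolding smag_P[OF nz] using nonzero_P_entry_bound[OF pp nz] by (intro sum_mono) blast
  then show ?thesis using sum_bnd[OF i pp p0 nonzero_P_preserves_Z[OF pp nz]] by simp
qed

lemma ssgn_P_if_eq_K:
  assumes i: "i < n" "v i \<noteq> 0" and pp: "p permutes {..<n}" and p0: "p 0 = i" and nz: "P p \<noteq> 0"
    and max: "smag (P p) = K i"
  shows "sign p * ssgn (P p) = ssgn (v i) * ssgn (v 0)"
proof -
  note pZ = nonzero_P_preserves_Z[OF pp nz] and bound = nonzero_P_entry_bound[OF pp nz]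
  have tight: "\<forall>r\<in>R. smag (B r (p r)) = bnd p r"
  proof (rule ccontr)
    assume "\<not> ?thesis"
    then have "\<exists>r\<in>R. smag (B r (p r)) < bnd p r" using bound by (meson order_le_less)
    then have "smag (P p) < (\<Sum>r\<in>R. bnd p r)"
      unfolding smag_P[OF nz] using bound by (intro sum_strict_mono_ex1) (auto simp: R_def)
    then show False using max sum_bnd[OF i pp p0 pZ] by simp
  qed
  show ?thesis unfolding ssgn_P
  proof (rule sign_tight_perm[OF i pp p0 pZ])
    show "\<forall>r\<in>R \<inter> Z. p r = r" using bound tight by blast
    show "\<forall>r\<in>R - Z. ssgn (B r (p r)) = ssgn (v r) * ssgn (v (p r)) * (if p r = r then 1 else -1)"
      using bound tight by blast
    show "\<forall>r\<in>R. p r \<noteq> r \<longrightarrow> height r < height (p r)" using bound tight by blast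
  qed
qed

lemma P_attains_K:
  assumes i: "i < n" "v i \<noteq> 0" and pp: "p permutes {..<n}" and p0: "p 0 = i" and pZ: "p ` Z = Z"
    and tight: "\<forall>r\<in>R. B r (p r) \<noteq> 0 \<and> smag (B r (p r)) = bnd p r"
  shows "P p \<noteq> 0" "smag (P p) = K i"
proof -
  show nz: "P p \<noteq> 0" using tight by (simp add: P_eq_0_iff)
  have "smag (P p) = (\<Sum>r\<in>R. bnd p r)" using tight by (simp add: smag_P[OF nz])
  then show "smag (P p) = K i" using sum_bnd[OF i pp p0 pZ] by simp
qed

text \<open>Closing the chain of tight steps from i to 0 into a cycle gives a term of maximal
  magnitude.\<close>

lemma exists_perm_attaining_K:
  assumes i: "i < n" "v i \<noteq> 0"
  shows "\<exists>p. p permutes {..<n} \<and> p 0 = i \<and> P p \<noteq> 0 \<and> smag (P p) = K i"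
proof -
  define f where "f r = (SOME c. c < n \<and> c \<noteq> r \<and> A r c * v c = A 0 0 * v r)" for r
  have f: "f r < n \<and> f r \<noteq> r \<and> A r (f r) * v (f r) = A 0 0 * v r" if "r \<in> supp - {0}" for r
  proof -
    have "\<exists>c<n. c \<noteq> r \<and> A r c * v c = A 0 0 * v r"
      using tight_step_exists that by (auto simp: in_supp_iff)
    then show ?thesis unfolding f_def by (rule someI_ex[where P="\<lambda>c. c < n \<and> _ c"])
  qed
  have "f x \<in> supp \<and> height x < height (f x)" if x: "x \<in> supp - {0}" for x
  proof -
    have "x < n" "v x \<noteq> 0" using x by (auto simp: in_supp_iff)
    then show ?thesis using f[OF x] tight_step(1,5)[of x "f x"] by (simp add: in_supp_iff)
  qed
  then obtain p where p: "p permutes supp" "p 0 = i" "\<forall>x\<in>supp - {0}. p x = x \<or> p x = f x"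
    using permutation_along_increasing_steps[OF finite_supp zero_in_supp, of i f height] i
    by (auto simp: in_supp_iff)
  have pp: "p permutes {..<n}" using p(1) by (rule permutes_subset) (auto simp: supp_def)
  have fixed: "p r = r" if "r \<notin> supp" for r using permutes_not_in[OF p(1) that] .
  have pZ: "p ` Z = Z"
    using fixed by (force simp: in_supp_iff Z_def)
  have "B r (p r) \<noteq> 0 \<and> smag (B r (p r)) = bnd p r" if r: "r \<in> R" for r
  proof (cases "p r = r")
    case True
    then show ?thesis using B_diag r by (simp add: R_def bnd_def zero_smax_def)
  next
    case False
    then have r_supp: "r \<in> supp - {0}" using fixed r by (auto simp: R_def)
    then have "p r = f r" using p(3) False by blast
    then show ?thesis
      using B_tight_entry[of r "f r"] f[OF r_supp] r_supp by (simp add: in_supp_iff bnd_def Z_def)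
  qed
  then show ?thesis using P_attains_K[OF i pp p(2) pZ] pp p(2) by blast
qed

lemma cofactor_term_eq_if_max:
  assumes i: "i < n" "v i \<noteq> 0"
    and X: "signed X" "ssgn X = ssgn (v i) * ssgn (v 0)" "smag X = K i"
    and pp: "p permutes {..<n}" "p 0 = i" and nz: "P p \<noteq> 0" and max: "smag (P p) = K i"
  shows "psign p * P p = X"
proof (rule signed_smax_eqI)
  show "signed (psign p * P p)" using signed_P[OF pp(1)] by (simp add: signed_mult)
  show "ssgn (psign p * P p) = ssgn X"
    using ssgn_P_if_eq_K[OF i pp nz max] X(2) by (simp add: ssgn_mult)
  show "smag (psign p * P p) = smag X" using nz max X(3) by (simp add: smag_mult)
qed (rule X(1))

lemma cofactor_term_le:
  assumes i: "i < n" "v i \<noteq> 0"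
    and X: "signed X" "X \<noteq> 0" "ssgn X = ssgn (v i) * ssgn (v 0)" "smag X = K i"
    and pp: "p permutes {..<n}" "p 0 = i"
  shows "sle (psign p * P p) X"
proof (cases "P p = 0")
  case False
  show ?thesis
  proof (cases "smag (P p) = K i")
    case True
    then show ?thesis using cofactor_term_eq_if_max[OF i X(1,3,4) pp False] by (simp add: sle_def)
  next
    case not_max: False
    then have "smag (psign p * P p) < smag X"
      using smag_P_le_K[OF i pp False] X(4) False by (simp add: smag_mult)
    then show ?thesis using sle_iff[OF _ X(1,2)] signed_P[OF pp(1)] by (simp add: signed_mult)
  qed
qed (simp add: sle_def)

lemma sadj_B_col0_signed:
  assumes i: "i < n"
  shows "signed (sadj n B i 0)"
proof -
  define T where "T = {p. p permutes {..<n} \<and> p 0 = i}"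
  have adj: "sadj n B i 0 = (\<Sum>p\<in>T. psign p * P p)"
    using sadj_col0_eq[OF i] by (simp add: T_def P_def R_def)
  show ?thesis
  proof (cases "v i = 0")
    case True
    then have "\<forall>p\<in>T. P p = 0" using P_eq_0_if_v_zero[OF i] by (simp add: T_def)
    then show ?thesis by (simp add: adj)
  next
    case False
    have "ssgn (v i) * ssgn (v 0) * (ssgn (v i) * ssgn (v 0)) = 1"
      using ssgn_v_square[OF i False] ssgn_v_square[of 0] v_0_nonzero n_pos
      by (simp add: algebra_simps)
    then have "ssgn (v i) * ssgn (v 0) = 1 \<or> ssgn (v i) * ssgn (v 0) = -1"
      by (simp only: square_eq_1_iff)
    then obtain X where X: "signed X" "X \<noteq> 0" "ssgn X = ssgn (v i) * ssgn (v 0)" "smag X = K i"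
      by (rule signed_smax_exists)
    obtain p where p: "p permutes {..<n}" "p 0 = i" "P p \<noteq> 0" "smag (P p) = K i"
      using exists_perm_attaining_K[OF i False] by blast
    have "finite T"
      unfolding T_def by (rule finite_subset[OF _ finite_permutations[of "{..<n}"]]) auto
    then have "sadj n B i 0 = X"
      unfolding adj using p cofactor_term_le[OF i False X] cofactor_term_eq_if_max[OF i False X(1,3,4)]
      by (intro sum_eq_attained_upper_bound[of T _ X p]) (auto simp: T_def)
    then show ?thesis using X(1) by simp
  qed
qed

end

theorem corollary5p20:
  fixes A :: "'a::linordered_ab_group_add smat" and n :: nat
  assumes div: "divisible_group TYPE('a)"
    and n: "n \<ge> 1"
    and tpd: "TPD n A"
    and sorted: "\<forall>i j. i \<le> j \<and> j < n \<longrightarrow> sle (A j j) (A i i)"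
    and simple: "n \<ge> 2 \<longrightarrow> sgt (A 0 0) (A 1 1)"
    and notsigned: "\<not> (\<forall>i<n. signed (sadj n (\<lambda>i j. A 0 0 * sident i j \<ominus> A i j) i 0))"
  shows "\<not> (\<exists>v. strong_eigenvector n A (A 0 0) v)"
proof
  assume "\<exists>v. strong_eigenvector n A (A 0 0) v"
  then obtain v where "strong_eigenvector n A (A 0 0) v" ..
  then interpret tpd_eigenvector A n v
    using n tpd sorted simple by unfold_locales
  show False
    using notsigned sadj_B_col0_signed unfolding B_def by blast
qed

end
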